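(* Let $k\ge3$ and let $\mathcal S=\sum_{\alpha\ge k}\Psi^{(\alpha)}\,\partial/\partial\psi^{(\alpha)}$ be a symmetry of $\mathcal E_*$ (an invisible symmetry of depth $k$), i.e. $[\mathcal S,D^{( * )}_x]=[\mathcal S,D^{( * )}_y]=0$, with $\Psi^{(\alpha)}$ smooth functions on $\mathcal E_*$. Then $\Psi^{(k)}$ and $\Psi^{(k+1)}$ are constants. In particular, if $\Psi^{(k)}\neq0$, then after multiplication by a nonzero constant $$\mathcal S=\frac{\partial}{\partial\psi^{(k)}}+\gamma\frac{\partial}{\partial\psi^{(k+1)}}+\sum_{\alpha\ge k+2}\Psi^{(\alpha)}\frac{\partial}{\partial\psi^{(\alpha)}},\qquad\gamma\in\mathbb R.$$
   Context: Let $\mathcal E_1$ be the system $u_y+vu_x=\frac1{v-u}$, $v_y+uv_x=\frac1{u-v}$ with internal coordinates $x,y,u_i=\partial^iu/\partial x^i$, $v_i=\partial^iv/\partial x^i$ ($i\ge0$) and total derivatives $D_x=\partial_x+\sum_i(u_{i+1}\partial_{u_i}+v_{i+1}\partial_{v_i})$, $D_y=\partial_y+\sum_i\big(D_x^i(\tfrac1{v-u}-vu_1)\partial_{u_i}+D_x^i(\tfrac1{u-v}-uv_1)\partial_{v_i}\big)$. Let $\sigma_m=\sum_{i+j=m}u^iv^j$, $\psi^{(1)}=y$, $\psi^{(2)}=x$, and for $k\ge2$ put $X^{(k)}=\sigma_{k-2}-\sum_{i=1}^{k-3}i\,\sigma_{k-i-3}\psi^{(i)}$, for $k\ge3$ put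 $Y^{(k)}=-uv\,X^{(k-1)}-(k-2)\psi^{(k-2)}$. The space $\mathcal E_*$ has coordinates $x,y,u_i,v_i$ and $\psi^{(k)}$, $k\ge3$, with commuting total derivatives $D^{( * )}_x=D_x+\sum_{k\ge3}X^{(k)}\partial/\partial\psi^{(k)}$, $D^{( * )}_y=D_y+\sum_{k\ge3}Y^{(k)}\partial/\partial\psi^{(k)}$. Functions on $\mathcal E_*$ depend on finitely many coordinates. *)

theory Defs
  imports "HOL-Analysis.Analysis"
begin

text \<open>Coordinates of the covering space E_*: x, y, u_i, v_i (i >= 0) and psi^(n) (n >= 3).
  The constructor Cpsi n is only a genuine coordinate for n >= 3.\<close>
datatype coord = Cx | Cy | Cu nat | Cv nat | Cpsi nat

definition valid_coord :: "coord \<Rightarrow> bool" where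
  "valid_coord c = (case c of Cpsi n \<Rightarrow> 3 \<le> n | _ \<Rightarrow> True)"

type_synonym pt = "coord \<Rightarrow> real"

text \<open>Domain of the system: u \<noteq> v (so that 1/(v-u) is defined).\<close>
definition Dom :: "pt set" where
  "Dom = {p. p (Cu 0) \<noteq> p (Cv 0)}"

definition pd :: "coord \<Rightarrow> (pt \<Rightarrow> real) \<Rightarrow> pt \<Rightarrow> real" where
  "pd c f p = deriv (\<lambda>t. f (p(c := t))) (p c)"

definition iter_pd :: "coord list \<Rightarrow> (pt \<Rightarrow> real) \<Rightarrow> pt \<Rightarrow> real" where
  "iter_pd cs f = foldr pd cs f"

definition depends_fin :: "(pt \<Rightarrow> real) \<Rightarrow> bool" where
  "depends_fin f \<longleftrightarrow> (\<exists>C. finite C \<and> (\<forall>c\<in>C. valid_coord c) \<and>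
      (\<forall>p\<in>Dom. \<forall>q\<in>Dom. (\<forall>c\<in>C. p c = q c) \<longrightarrow> f p = f q))"

definition smooth_fun :: "(pt \<Rightarrow> real) \<Rightarrow> bool" where
  "smooth_fun f \<longleftrightarrow> depends_fin f \<and>
     (\<forall>cs. continuous_on Dom (iter_pd cs f) \<and>
        (\<forall>c. \<forall>p\<in>Dom. (\<lambda>t. iter_pd cs f (p(c := t))) differentiable (at (p c))))"

text \<open>Vector field sum_c coef_c * d/dc applied to a function (finite sum for
  functions depending on finitely many coordinates).\<close>
definition vfield :: "(coord \<Rightarrow> pt \<Rightarrow> real) \<Rightarrow> (pt \<Rightarrow> real) \<Rightarrow> pt \<Rightarrow> real" where
  "vfield coef f p = infsum (\<lambda>c. coef c p * pd c f p) UNIV"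

definition sigma :: "nat \<Rightarrow> pt \<Rightarrow> real" where
  "sigma m p = (\<Sum>i\<le>m. p (Cu 0) ^ i * p (Cv 0) ^ (m - i))"

definition psi :: "nat \<Rightarrow> pt \<Rightarrow> real" where
  "psi n p = (if n = 1 then p Cy else if n = 2 then p Cx else p (Cpsi n))"

definition Xk :: "nat \<Rightarrow> pt \<Rightarrow> real" where
  "Xk k p = sigma (k - 2) p - (\<Sum>i = 1..k - 3. real i * sigma (k - i - 3) p * psi i p)"

definition Yk :: "nat \<Rightarrow> pt \<Rightarrow> real" where
  "Yk k p = - p (Cu 0) * p (Cv 0) * Xk (k - 1) p - real (k - 2) * psi (k - 2) p"

definition coefX1 :: "coord \<Rightarrow> pt \<Rightarrow> real" where
  "coefX1 c p = (case c of Cx \<Rightarrow> 1 | Cy \<Rightarrow> 0 | Cu i \<Rightarrow> p (Cu (Suc i))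
                  | Cv i \<Rightarrow> p (Cv (Suc i)) | Cpsi n \<Rightarrow> 0)"

definition Dx1 :: "(pt \<Rightarrow> real) \<Rightarrow> pt \<Rightarrow> real" where
  "Dx1 = vfield coefX1"

definition Fu :: "pt \<Rightarrow> real" where
  "Fu p = 1 / (p (Cv 0) - p (Cu 0)) - p (Cv 0) * p (Cu 1)"

definition Fv :: "pt \<Rightarrow> real" where
  "Fv p = 1 / (p (Cu 0) - p (Cv 0)) - p (Cu 0) * p (Cv 1)"

definition coefXs :: "coord \<Rightarrow> pt \<Rightarrow> real" where
  "coefXs c p = (case c of Cx \<Rightarrow> 1 | Cy \<Rightarrow> 0 | Cu i \<Rightarrow> p (Cu (Suc i))
                  | Cv i \<Rightarrow> p (Cv (Suc i)) | Cpsi n \<Rightarrow> (if 3 \<le> n then Xk n p else 0))"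

definition coefYs :: "coord \<Rightarrow> pt \<Rightarrow> real" where
  "coefYs c p = (case c of Cx \<Rightarrow> 0 | Cy \<Rightarrow> 1 | Cu i \<Rightarrow> (Dx1 ^^ i) Fu p
                  | Cv i \<Rightarrow> (Dx1 ^^ i) Fv p | Cpsi n \<Rightarrow> (if 3 \<le> n then Yk n p else 0))"

definition Dxs :: "(pt \<Rightarrow> real) \<Rightarrow> pt \<Rightarrow> real" where
  "Dxs = vfield coefXs"

definition Dys :: "(pt \<Rightarrow> real) \<Rightarrow> pt \<Rightarrow> real" where
  "Dys = vfield coefYs"

definition invis_field :: "nat \<Rightarrow> (nat \<Rightarrow> pt \<Rightarrow> real) \<Rightarrow> (pt \<Rightarrow> real) \<Rightarrow> pt \<Rightarrow> real" where
  "invis_field k Psi = vfield (\<lambda>c p. case c of Cpsi a \<Rightarrow> (if k \<le> a then Psi a p else 0) | _ \<Rightarrow> 0)"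

definition is_symmetry :: "((pt \<Rightarrow> real) \<Rightarrow> pt \<Rightarrow> real) \<Rightarrow> bool" where
  "is_symmetry S \<longleftrightarrow> (\<forall>f. smooth_fun f \<longrightarrow>
      (\<forall>p\<in>Dom. S (Dxs f) p = Dxs (S f) p \<and> S (Dys f) p = Dys (S f) p))"

end

theory Submission
  imports Defs "HOL-Computational_Algebra.Polynomial"
begin

text \<open>
  Applying [S, D_x] = [S, D_y] = 0 to the coordinate function psi^(a), a \<in> {k, k+1}, gives
  D_x Psi^(a) = S X^(a) = 0 and D_y Psi^(a) = S Y^(a) = 0, because X^(a) and Y^(a) only involve
  psi^(i) with i < k. So it suffices to show that a smooth F with D_x F = D_y F = 0 is constant
  on each of the two components u < v and v < u of the domain. The finitely many coordinates
  of F are eliminated one at a time: D_x F is affine in the highest jet variable u_(n+1), with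
  slope dF/du_n; once no jets are left, on the slice u = 0, v = b the function D_x F is a
  polynomial in b whose coefficient of b^(M-2) is dF/dpsi^(M) for the highest psi^(M);
  finally D_x F = dF/dx and D_y F = dF/dy.
\<close>

definition depends_on :: "(pt \<Rightarrow> real) \<Rightarrow> coord set \<Rightarrow> bool" where
  "depends_on F C \<longleftrightarrow> (\<forall>p\<in>Dom. \<forall>q\<in>Dom. (\<forall>c\<in>C. p c = q c) \<longrightarrow> F p = F q)"

lemma depends_on_mono: "depends_on F C \<Longrightarrow> C \<subseteq> D \<Longrightarrow> depends_on F D"
  unfolding depends_on_def by blast

lemma depends_onD:
  "depends_on F C \<Longrightarrow> p \<in> Dom \<Longrightarrow> q \<in> Dom \<Longrightarrow> (\<And>c. c \<in> C \<Longrightarrow> p c = q c) \<Longrightarrow> F p = F q"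
  unfolding depends_on_def by blast

lemma mem_Dom_iff: "{c, d} = {Cu 0, Cv 0} \<Longrightarrow> p \<in> Dom \<longleftrightarrow> p c \<noteq> p d"
  by (auto simp: Dom_def doubleton_eq_iff)

lemma open_fun_upd_Dom: "open {s. p(c := s) \<in> Dom}"
proof -
  have "{s. p(c := s) \<in> Dom} =
      {s. (if c = Cu 0 then s else p (Cu 0)) \<noteq> (if c = Cv 0 then s else p (Cv 0))}"
    by (auto simp: Dom_def)
  also have "open \<dots>"
    by (intro open_Collect_neq continuous_intros) (cases "c = Cu 0"; cases "c = Cv 0"; simp)+
  finally show ?thesis .
qed

lemma pd_cong:
  assumes "open S" "p c \<in> S" "q c = p c" "\<And>s. s \<in> S \<Longrightarrow> F (p(c := s)) = G (q(c := s))"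
  shows "pd c F p = pd c G q"
  unfolding pd_def
proof (rule deriv_cong_ev)
  show "\<forall>\<^sub>F s in nhds (p c). F (p(c := s)) = G (q(c := s))"
    using assms by (auto simp: eventually_nhds)
qed (use assms in auto)

lemma pd_eq_0_if_independent:
  assumes "depends_on F C" "c \<notin> C" "p \<in> Dom"
  shows "pd c F p = 0"
proof -
  have "pd c F p = pd c (\<lambda>_. F p) p"
    by (rule pd_cong[OF open_fun_upd_Dom[of p c]]) (use assms in \<open>auto intro: depends_onD\<close>)
  then show ?thesis by (simp add: pd_def)
qed

lemma pd_fun_upd_independent:
  assumes "depends_on F C" "c' \<notin> C" "c \<noteq> c'" "p \<in> Dom" "p(c' := t) \<in> Dom"
  shows "pd c F (p(c' := t)) = pd c F p"
  by (rule pd_cong[OF open_Int[OF open_fun_upd_Dom[of "p(c' := t)" c] open_fun_upd_Dom[of p c]]])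
    (use assms fun_upd_idem[of "p(c' := t)" c "p c"] in \<open>auto intro: depends_onD\<close>)

lemma vfield_eq_sum:
  assumes "finite C" "depends_on F C" "p \<in> Dom"
  shows "vfield coef F p = (\<Sum>c\<in>C. coef c p * pd c F p)"
proof -
  have "vfield coef F p = infsum (\<lambda>c. coef c p * pd c F p) C"
    unfolding vfield_def
    by (rule infsum_cong_neutral) (use assms pd_eq_0_if_independent in auto)
  then show ?thesis using assms by simp
qed

lemma smooth_fun_differentiable:
  "smooth_fun F \<Longrightarrow> p \<in> Dom \<Longrightarrow> (\<lambda>t. F (p(c := t))) differentiable (at (p c))"
  unfolding smooth_fun_def by (metis iter_pd_def foldr_Nil id_apply)

lemma fun_upd_eq_if_pd_eq_0:
  assumes "smooth_fun F" "\<And>q. q \<in> Dom \<Longrightarrow> pd c F q = 0"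
    and "\<And>s. s \<in> closed_segment a b \<Longrightarrow> p(c := s) \<in> Dom"
  shows "F (p(c := a)) = F (p(c := b))"
proof -
  have "((\<lambda>t. F (p(c := t))) has_field_derivative 0) (at s within closed_segment a b)"
    if "s \<in> closed_segment a b" for s
  proof -
    let ?q = "p(c := s)"
    have "?q \<in> Dom" using assms(3) that .
    moreover have "(\<lambda>t. F (?q(c := t))) = (\<lambda>t. F (p(c := t)))" by simp
    ultimately show ?thesis
      using smooth_fun_differentiable[OF assms(1), of ?q c] assms(2)[of ?q]
      by (auto simp: pd_def DERIV_deriv_iff_real_differentiable[symmetric] intro: has_field_derivative_at_within)
  qed
  then obtain K where "\<forall>s\<in>closed_segment a b. F (p(c := s)) = K"
    using has_field_derivative_zero_constant[OF convex_closed_segment] by blast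
  then show ?thesis by simp
qed

lemma depends_on_Diff_if_pd_eq_0:
  assumes "smooth_fun F" "depends_on F C" "c \<notin> {Cu 0, Cv 0}"
    and "\<And>q. q \<in> Dom \<Longrightarrow> pd c F q = 0"
  shows "depends_on F (C - {c})"
  unfolding depends_on_def
proof (intro ballI impI)
  fix p q assume pq: "p \<in> Dom" "q \<in> Dom" "\<forall>c'\<in>C - {c}. p c' = q c'"
  have line: "p(c := s) \<in> Dom" for s
    using pq(1) assms(3) by (auto simp: Dom_def)
  have "F (p(c := p c)) = F (p(c := q c))"
    by (rule fun_upd_eq_if_pd_eq_0[OF assms(1,4) line])
  also have "\<dots> = F q"
    by (rule depends_onD[OF assms(2) line pq(2)]) (use pq(3) in auto)
  finally show "F p = F q" by simp
qed

lemma eq_if_same_component: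
  assumes F: "smooth_fun F" and uv: "\<And>q. q \<in> Dom \<Longrightarrow> pd (Cu 0) F q = 0 \<and> pd (Cv 0) F q = 0"
    and cd: "{c, d} = {Cu 0, Cv 0}" and p: "p c < p d" and q: "q c < q d"
    and pq: "\<And>e. e \<notin> {c, d} \<Longrightarrow> p e = q e"
  shows "F p = F q"
proof -
  have c: "\<And>r. r \<in> Dom \<Longrightarrow> pd c F r = 0" and d: "\<And>r. r \<in> Dom \<Longrightarrow> pd d F r = 0"
    using uv cd by (auto simp: doubleton_eq_iff)
  have "c \<noteq> d" using cd by (auto simp: doubleton_eq_iff)
  \<comment> \<open>Raising \<open>d\<close> above both \<open>p d\<close> and \<open>q d\<close> first keeps the path off the diagonal \<open>u = v\<close>.\<close>
  define V where "V = max (p d) (q d) + 1"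
  have "F (p(d := p d)) = F (p(d := V))"
    by (rule fun_upd_eq_if_pd_eq_0[OF F d])
      (use p \<open>c \<noteq> d\<close> in \<open>auto simp: mem_Dom_iff[OF cd] closed_segment_eq_real_ivl V_def split: if_splits\<close>)
  moreover have "F (p(d := V, c := p c)) = F (p(d := V, c := q c))"
    by (rule fun_upd_eq_if_pd_eq_0[OF F c])
      (use p q \<open>c \<noteq> d\<close> in \<open>auto simp: mem_Dom_iff[OF cd] closed_segment_eq_real_ivl V_def split: if_splits\<close>)
  moreover have "F (p(d := V, c := q c, d := V)) = F (p(d := V, c := q c, d := q d))"
    by (rule fun_upd_eq_if_pd_eq_0[OF F d])
      (use q \<open>c \<noteq> d\<close> in \<open>auto simp: mem_Dom_iff[OF cd] closed_segment_eq_real_ivl V_def split: if_splits\<close>)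
  moreover have "p(d := p d) = p" "p(d := V, c := p c) = p(d := V)"
    "p(d := V, c := q c, d := V) = p(d := V, c := q c)" "p(d := V, c := q c, d := q d) = q"
    using pq \<open>c \<noteq> d\<close> by (auto simp: fun_eq_iff)
  ultimately show ?thesis
    by metis
qed

lemma psi_fun_upd_jet: "J \<in> {Cu, Cv} \<Longrightarrow> psi i (p(J j := t)) = psi i p"
  by (auto simp: psi_def)

lemma Xk_fun_upd_jet: "J \<in> {Cu, Cv} \<Longrightarrow> Xk m (p(J (Suc j) := t)) = Xk m p"
  by (auto simp: Xk_def sigma_def psi_fun_upd_jet)

lemma pd_jet_eq_0_if_Dxs_eq_0:
  assumes J: "J \<in> {Cu, Cv}" and C: "finite C" "depends_on F C" "J (Suc n) \<notin> C"
    and Dx: "\<And>q. q \<in> Dom \<Longrightarrow> Dxs F q = 0" and p: "p \<in> Dom"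
  shows "pd (J n) F p = 0"
proof -
  define q where "q t = p(J (Suc n) := t)" for t
  have q_Dom: "q t \<in> Dom" for t
    using p J by (auto simp: q_def Dom_def)
  have affine: "Dxs F (q t) = (\<Sum>c\<in>C. coefXs c (q 0) * pd c F p)
      + t * (if J n \<in> C then pd (J n) F p else 0)" for t
  proof -
    have "Dxs F (q t) = (\<Sum>c\<in>C. coefXs c (q t) * pd c F (q t))"
      unfolding Dxs_def by (rule vfield_eq_sum[OF C(1,2) q_Dom])
    also have "\<dots> = (\<Sum>c\<in>C. coefXs c (q 0) * pd c F p + (if c = J n then t * pd c F p else 0))"
    proof (rule sum.cong)
      fix c assume "c \<in> C"
      then have "pd c F (q t) = pd c F p"
        unfolding q_def using C p q_Dom[unfolded q_def] by (intro pd_fun_upd_independent) auto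
      moreover have "coefXs c (q t) = coefXs c (q 0) + (if c = J n then t else 0)"
        using J by (cases c) (auto simp: coefXs_def q_def Xk_fun_upd_jet)
      ultimately show "coefXs c (q t) * pd c F (q t) =
          coefXs c (q 0) * pd c F p + (if c = J n then t * pd c F p else 0)"
        by (simp add: algebra_simps)
    qed simp
    also have "\<dots> = (\<Sum>c\<in>C. coefXs c (q 0) * pd c F p) + t * (if J n \<in> C then pd (J n) F p else 0)"
      using C(1) by (simp add: sum.distrib)
    finally show ?thesis .
  qed
  have "(if J n \<in> C then pd (J n) F p else 0) = 0"
    using affine[of 0] affine[of 1] Dx[OF q_Dom] by simp
  then show ?thesis
    using pd_eq_0_if_independent[OF C(2) _ p] by (auto split: if_splits)
qed

lemma depends_on_Diff_jets:
  assumes J: "J \<in> {Cu, Cv}" and F: "smooth_fun F" and C: "finite C" "depends_on F C"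
    and Dx: "\<And>q. q \<in> Dom \<Longrightarrow> Dxs F q = 0"
  shows "depends_on F (C - range (\<lambda>n. J (Suc n)))"
proof -
  have "depends_on F (C - range (\<lambda>n. J (Suc n)))"
    if "finite C" "depends_on F C" "\<forall>n\<ge>N. J (Suc n) \<notin> C" for N C
    using that
  proof (induction N arbitrary: C)
    case 0
    then have "C - range (\<lambda>n. J (Suc n)) = C" by auto
    with 0 show ?case by simp
  next
    case (Suc N)
    have "pd (J (Suc N)) F q = 0" if "q \<in> Dom" for q
      using pd_jet_eq_0_if_Dxs_eq_0[OF J Suc.prems(1,2) _ Dx that] Suc.prems(3) by simp
    then have "depends_on F (C - {J (Suc N)})"
      using J by (intro depends_on_Diff_if_pd_eq_0[OF F Suc.prems(2)]) auto
    moreover have "\<forall>n\<ge>N. J (Suc n) \<notin> C - {J (Suc N)}"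
      using Suc.prems(3) by (metis Diff_iff le_eq_less_or_eq Suc_le_eq singletonI)
    ultimately have "depends_on F (C - {J (Suc N)} - range (\<lambda>n. J (Suc n)))"
      using Suc.IH Suc.prems(1) by blast
    moreover have "C - {J (Suc N)} - range (\<lambda>n. J (Suc n)) = C - range (\<lambda>n. J (Suc n))"
      by auto
    ultimately show ?case by simp
  qed
  moreover have "finite {n. J (Suc n) \<in> C}"
    using finite_vimageI[OF C(1), of "\<lambda>n. J (Suc n)"] J by (auto simp: inj_def vimage_def)
  then obtain N where "\<forall>n\<ge>N. J (Suc n) \<notin> C"
    by (meson finite_nat_set_iff_bounded leD mem_Collect_eq)
  ultimately show ?thesis using C by blast
qed

lemma sigma_at_u0: "sigma j (p(Cu 0 := 0, Cv 0 := b)) = b ^ j"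
proof -
  have "sigma j (p(Cu 0 := 0, Cv 0 := b)) = (\<Sum>i\<le>j. if i = 0 then b ^ j else 0)"
    unfolding sigma_def by (rule sum.cong) auto
  then show ?thesis by simp
qed

definition Xk_poly :: "pt \<Rightarrow> nat \<Rightarrow> real poly" where
  "Xk_poly p m = monom 1 (m - 2) - (\<Sum>i = 1..m - 3. smult (real i * psi i p) (monom 1 (m - i - 3)))"

lemma poly_Xk_poly: "poly (Xk_poly p m) b = Xk m (p(Cu 0 := 0, Cv 0 := b))"
  by (simp add: Xk_def Xk_poly_def sigma_at_u0 psi_fun_upd_jet poly_sum poly_monom mult_ac)

lemma coeff_Xk_poly:
  assumes "3 \<le> m" "m \<le> M"
  shows "coeff (Xk_poly p m) (M - 2) = (if m = M then 1 else 0)"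
proof -
  have "(\<Sum>i = 1..m - 3. coeff (smult (real i * psi i p) (monom 1 (m - i - 3))) (M - 2)) = 0"
    by (rule sum.neutral) (use assms in \<open>auto simp: coeff_monom\<close>)
  moreover have "m - 2 = M - 2 \<longleftrightarrow> m = M"
    using assms by arith
  ultimately show ?thesis
    by (simp add: Xk_poly_def coeff_diff coeff_sum coeff_monom)
qed

definition coefXs_poly :: "pt \<Rightarrow> coord \<Rightarrow> real poly" where
  "coefXs_poly p c = (case c of Cx \<Rightarrow> 1 | Cy \<Rightarrow> 0 | Cu i \<Rightarrow> [:p (Cu (Suc i)):]
     | Cv i \<Rightarrow> [:p (Cv (Suc i)):] | Cpsi m \<Rightarrow> (if 3 \<le> m then Xk_poly p m else 0))"

lemma poly_coefXs_poly: "poly (coefXs_poly p c) b = coefXs c (p(Cu 0 := 0, Cv 0 := b))"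
  by (cases c) (auto simp: coefXs_poly_def coefXs_def poly_Xk_poly)

lemma coeff_coefXs_poly:
  assumes "\<And>m. c = Cpsi m \<Longrightarrow> m \<le> M" "3 \<le> M"
  shows "coeff (coefXs_poly p c) (M - 2) = (if c = Cpsi M then 1 else 0)"
  using assms by (cases c) (auto simp: coefXs_poly_def coeff_Xk_poly coeff_pCons split: nat.split)

lemma pd_top_psi_eq_0_if_Dxs_eq_0:
  assumes F: "smooth_fun F" and C: "finite C" "depends_on F C"
    and uv: "\<And>q. q \<in> Dom \<Longrightarrow> pd (Cu 0) F q = 0 \<and> pd (Cv 0) F q = 0"
    and Dx: "\<And>q. q \<in> Dom \<Longrightarrow> Dxs F q = 0"
    and top: "\<And>m. Cpsi m \<in> C \<Longrightarrow> m \<le> M" "3 \<le> M" and p: "p \<in> Dom"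
  shows "pd (Cpsi M) F p = 0"
proof -
  define pb where "pb b = p(Cu 0 := 0, Cv 0 := b)" for b
  define R where "R = (if p (Cu 0) < p (Cv 0) then {0<..} else {..<(0::real)})"
  have pb_Dom: "pb b \<in> Dom" if "b \<in> R" for b
    using that by (auto simp: R_def pb_def Dom_def split: if_splits)
  have same_component: "F (r(Cu 0 := 0, Cv 0 := b)) = F r"
    if "b \<in> R" "r (Cu 0) = p (Cu 0)" "r (Cv 0) = p (Cv 0)" for r b
  proof (cases "p (Cu 0) < p (Cv 0)")
    case True
    then show ?thesis
      using that by (intro eq_if_same_component[OF F uv, of "Cu 0" "Cv 0"]) (auto simp: R_def)
  next
    case False
    then have "p (Cv 0) < p (Cu 0)"
      using p by (auto simp: Dom_def)
    then show ?thesis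
      using that False by (intro eq_if_same_component[OF F uv, of "Cv 0" "Cu 0"]) (auto simp: R_def)
  qed
  have pd_pb: "pd c F (pb b) = pd c F p" if "b \<in> R" for b c
  proof (cases "c \<in> {Cu 0, Cv 0}")
    case True
    then show ?thesis using uv[OF pb_Dom[OF that]] uv[OF p] by auto
  next
    case False
    then have "(pb b)(c := s) = (p(c := s))(Cu 0 := 0, Cv 0 := b)" for s
      by (auto simp: pb_def fun_eq_iff)
    then show ?thesis
      using False that by (intro pd_cong[of UNIV]) (auto simp: pb_def same_component)
  qed
  define P where "P = (\<Sum>c\<in>C. smult (pd c F p) (coefXs_poly p c))"
  have "poly P b = 0" if "b \<in> R" for b
  proof -
    have "poly P b = (\<Sum>c\<in>C. coefXs c (pb b) * pd c F (pb b))"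
      by (simp add: P_def poly_sum poly_coefXs_poly pd_pb[OF that, unfolded pb_def] pb_def mult.commute)
    also have "\<dots> = Dxs F (pb b)"
      unfolding Dxs_def by (rule vfield_eq_sum[OF C pb_Dom[OF that], symmetric])
    finally show ?thesis using Dx[OF pb_Dom[OF that]] by simp
  qed
  moreover have "infinite R"
    by (simp add: R_def infinite_Ioi infinite_Iio)
  ultimately have "P = 0"
    using poly_roots_finite[of P] finite_subset[of R "{x. poly P x = 0}"] by blast
  moreover have "coeff P (M - 2) = (\<Sum>c\<in>C. if c = Cpsi M then pd c F p else 0)"
    unfolding P_def coeff_sum
  proof (intro sum.cong refl)
    fix c assume "c \<in> C"
    then have "coeff (coefXs_poly p c) (M - 2) = (if c = Cpsi M then 1 else 0)"
      using top by (intro coeff_coefXs_poly) auto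
    then show "coeff (smult (pd c F p) (coefXs_poly p c)) (M - 2) = (if c = Cpsi M then pd c F p else 0)"
      by simp
  qed
  ultimately show ?thesis
    using C pd_eq_0_if_independent[OF C(2) _ p] by (auto split: if_splits)
qed

lemma depends_on_Diff_psi:
  assumes F: "smooth_fun F" and C: "finite C" "\<forall>c\<in>C. valid_coord c" "depends_on F C"
    and uv: "\<And>q. q \<in> Dom \<Longrightarrow> pd (Cu 0) F q = 0 \<and> pd (Cv 0) F q = 0"
    and Dx: "\<And>q. q \<in> Dom \<Longrightarrow> Dxs F q = 0"
  shows "depends_on F (C - range Cpsi)"
proof -
  have "depends_on F (C - range Cpsi)"
    if "finite C" "\<forall>c\<in>C. valid_coord c" "depends_on F C" "\<forall>m. Cpsi m \<in> C \<longrightarrow> m < N + 3"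
    for N C
    using that
  proof (induction N arbitrary: C)
    case 0
    then have "C - range Cpsi = C" by (force simp: valid_coord_def)
    with 0 show ?case by simp
  next
    case (Suc N)
    have "pd (Cpsi (N + 3)) F q = 0" if "q \<in> Dom" for q
      using Suc.prems(4)
      by (intro pd_top_psi_eq_0_if_Dxs_eq_0[OF F Suc.prems(1,3) uv Dx _ _ that]) auto
    then have "depends_on F (C - {Cpsi (N + 3)})"
      by (intro depends_on_Diff_if_pd_eq_0[OF F Suc.prems(3)]) auto
    then have "depends_on F (C - {Cpsi (N + 3)} - range Cpsi)"
      using Suc.prems by (intro Suc.IH) (auto simp: less_Suc_eq)
    moreover have "C - {Cpsi (N + 3)} - range Cpsi = C - range Cpsi"
      by auto
    ultimately show ?case by simp
  qed
  moreover have "finite {m. Cpsi m \<in> C}"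
    using finite_vimageI[OF C(1), of Cpsi] by (simp add: vimage_def inj_def)
  then obtain N where "\<forall>m. Cpsi m \<in> C \<longrightarrow> m < N + 3"
    by (metis finite_nat_set_iff_bounded mem_Collect_eq trans_less_add1)
  ultimately show ?thesis using C by blast
qed

lemma first_integral_depends_on_uv:
  assumes F: "smooth_fun F"
    and Dx: "\<And>q. q \<in> Dom \<Longrightarrow> Dxs F q = 0" and Dy: "\<And>q. q \<in> Dom \<Longrightarrow> Dys F q = 0"
  shows "depends_on F {Cu 0, Cv 0}"
proof -
  obtain C where C: "finite C" "\<forall>c\<in>C. valid_coord c" "depends_on F C"
    using F unfolding smooth_fun_def depends_fin_def depends_on_def by blast
  define C1 where "C1 = C - range (\<lambda>n. Cu (Suc n)) - range (\<lambda>n. Cv (Suc n))"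
  have C1: "finite C1" "\<forall>c\<in>C1. valid_coord c" "depends_on F C1"
    using C depends_on_Diff_jets[OF _ F _ _ Dx] by (auto simp: C1_def)
  have uv: "pd (Cu 0) F q = 0 \<and> pd (Cv 0) F q = 0" if "q \<in> Dom" for q
    using pd_jet_eq_0_if_Dxs_eq_0[OF _ C1(1,3) _ Dx that, of _ 0] by (auto simp: C1_def)
  have "C1 - range Cpsi \<subseteq> {Cu 0, Cv 0, Cx, Cy}"
  proof
    fix c assume c: "c \<in> C1 - range Cpsi"
    show "c \<in> {Cu 0, Cv 0, Cx, Cy}"
    proof (cases c)
      case (Cu n)
      then show ?thesis using c by (cases n) (auto simp: C1_def)
    next
      case (Cv n)
      then show ?thesis using c by (cases n) (auto simp: C1_def)
    qed (use c in auto)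
  qed
  then have xy: "depends_on F {Cu 0, Cv 0, Cx, Cy}"
    using depends_on_Diff_psi[OF F C1 uv Dx] depends_on_mono by blast
  have "pd Cx F q = 0" if "q \<in> Dom" for q
  proof -
    have "Dxs F q = pd Cx F q"
      unfolding Dxs_def using vfield_eq_sum[OF _ xy that] uv[OF that] by (simp add: coefXs_def)
    then show ?thesis using Dx[OF that] by simp
  qed
  then have y: "depends_on F {Cu 0, Cv 0, Cy}"
    using depends_on_Diff_if_pd_eq_0[OF F xy, of Cx] by (simp add: insert_Diff_if)
  have "pd Cy F q = 0" if "q \<in> Dom" for q
  proof -
    have "Dys F q = pd Cy F q"
      unfolding Dys_def using vfield_eq_sum[OF _ y that] uv[OF that] by (simp add: coefYs_def)
    then show ?thesis using Dy[OF that] by simp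
  qed
  then show ?thesis
    using depends_on_Diff_if_pd_eq_0[OF F y, of Cy] by (simp add: insert_Diff_if)
qed

lemma first_integral_constant_on_component:
  assumes F: "smooth_fun F"
    and Dx: "\<And>q. q \<in> Dom \<Longrightarrow> Dxs F q = 0" and Dy: "\<And>q. q \<in> Dom \<Longrightarrow> Dys F q = 0"
    and H: "H \<in> {{p\<in>Dom. p (Cu 0) < p (Cv 0)}, {p\<in>Dom. p (Cv 0) < p (Cu 0)}}"
  shows "\<exists>K. \<forall>p\<in>H. F p = K"
proof -
  obtain c d where cd: "{c, d} = {Cu 0, Cv 0}" and H: "H = {p\<in>Dom. p c < p d}"
    using H by (elim insertE) (auto intro: that[of "Cu 0" "Cv 0"] that[of "Cv 0" "Cu 0"] simp: insert_commute)
  have dep_uv: "depends_on F {c, d}"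
    using first_integral_depends_on_uv[OF F Dx Dy] cd by simp
  have pd_uv: "pd (Cu 0) F q = 0 \<and> pd (Cv 0) F q = 0" if "q \<in> Dom" for q
    using pd_jet_eq_0_if_Dxs_eq_0[OF _ _ dep_uv _ Dx that, of _ 0] cd by (auto simp: doubleton_eq_iff)
  define p0 :: pt where "p0 = (\<lambda>_. 0)(d := 1)"
  have "c \<noteq> d" using cd by (auto simp: doubleton_eq_iff)
  have "F p = F p0" if "p \<in> H" for p
  proof -
    have "F p = F (p(c := 0, d := 1))"
      using that H \<open>c \<noteq> d\<close> by (intro eq_if_same_component[OF F pd_uv cd]) auto
    also have "\<dots> = F p0"
      using that H \<open>c \<noteq> d\<close> by (intro depends_onD[OF dep_uv]) (auto simp: mem_Dom_iff[OF cd] p0_def)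
    finally show ?thesis .
  qed
  then show ?thesis by blast
qed

lemma pd_coord: "pd c (\<lambda>p. p d) = (\<lambda>p. if c = d then 1 else 0)"
proof
  fix p :: pt
  have "(\<lambda>t. (p(c := t)) d) = (if c = d then (\<lambda>t. t) else (\<lambda>t. p d))"
    by auto
  then show "pd c (\<lambda>p. p d) p = (if c = d then 1 else 0)"
    by (simp add: pd_def)
qed

lemma pd_const: "pd c (\<lambda>p. K) = (\<lambda>p. 0)"
  by (simp add: pd_def fun_eq_iff)

lemma iter_pd_coord: "iter_pd cs (\<lambda>p. p d) \<in> {(\<lambda>p. p d), (\<lambda>p. 1), (\<lambda>p. 0)}"
proof (induction cs)
  case Nil
  then show ?case by (simp add: iter_pd_def)
next
  case (Cons c cs)
  then show ?case by (auto simp: iter_pd_def pd_coord pd_const)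
qed

lemma smooth_fun_coord:
  assumes "valid_coord d"
  shows "smooth_fun (\<lambda>p. p d)"
proof -
  have "depends_fin (\<lambda>p. p d)"
    unfolding depends_fin_def using assms by (intro exI[of _ "{d}"]) auto
  moreover have "continuous_on Dom (\<lambda>p::pt. p d)"
    by (rule continuous_on_subset[OF continuous_on_product_coordinates]) simp
  moreover have "(\<lambda>t. (p(c := t)) d) differentiable (at (p c))" for p :: pt and c
    by (cases "c = d") auto
  ultimately have "continuous_on Dom (iter_pd cs (\<lambda>p. p d)) \<and>
      (\<forall>c. \<forall>p\<in>Dom. (\<lambda>t. iter_pd cs (\<lambda>p. p d) (p(c := t))) differentiable (at (p c)))" for cs
    using iter_pd_coord[of cs d] by auto
  with \<open>depends_fin (\<lambda>p. p d)\<close> show ?thesis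
    unfolding smooth_fun_def by blast
qed

lemma vfield_coord: "vfield coef (\<lambda>p. p d) p = coef d p"
proof -
  have "vfield coef (\<lambda>p. p d) p = infsum (\<lambda>c. coef c p) {d}"
    unfolding vfield_def pd_coord by (rule infsum_cong_neutral) auto
  then show ?thesis by simp
qed

lemma Xk_fun_upd_psi: "a < b + 3 \<Longrightarrow> Xk a (p(Cpsi b := t)) = Xk a p"
  unfolding Xk_def sigma_def by (intro arg_cong2[where f = minus] refl sum.cong) (auto simp: psi_def)

lemma Yk_fun_upd_psi: "a < b + 2 \<Longrightarrow> 3 \<le> b \<Longrightarrow> Yk a (p(Cpsi b := t)) = Yk a p"
  unfolding Yk_def using Xk_fun_upd_psi[of "a - 1" b p t] by (auto simp: psi_def)

lemma invis_field_eq_0_if_independent: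
  assumes "\<And>b t. k \<le> b \<Longrightarrow> G (p(Cpsi b := t)) = G p"
  shows "invis_field k Psi G p = 0"
  unfolding invis_field_def vfield_def
proof (rule infsum_0)
  fix c
  show "(case c of Cpsi b \<Rightarrow> if k \<le> b then Psi b p else 0 | _ \<Rightarrow> 0) * pd c G p = 0"
    using assms by (cases c) (auto simp: pd_def)
qed

lemma invis_field_first_integrals:
  assumes k: "3 \<le> k" and S: "is_symmetry (invis_field k Psi)"
    and a: "a \<in> {k, Suc k}" and p: "p \<in> Dom"
  shows "Dxs (Psi a) p = 0 \<and> Dys (Psi a) p = 0"
proof -
  let ?S = "invis_field k Psi" and ?f = "\<lambda>p::pt. p (Cpsi a)"
  have "smooth_fun ?f"
    using k a by (intro smooth_fun_coord) (auto simp: valid_coord_def)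
  then have "?S (Dxs ?f) p = Dxs (?S ?f) p \<and> ?S (Dys ?f) p = Dys (?S ?f) p"
    using S p unfolding is_symmetry_def by blast
  moreover have "?S ?f = Psi a"
    using a by (auto simp: invis_field_def vfield_coord)
  moreover have "Dxs ?f = Xk a" "Dys ?f = Yk a"
    using k a by (auto simp: Dxs_def Dys_def vfield_coord coefXs_def coefYs_def)
  moreover have "?S (Xk a) p = 0"
    by (rule invis_field_eq_0_if_independent) (use a in \<open>auto intro: Xk_fun_upd_psi\<close>)
  moreover have "?S (Yk a) p = 0"
    by (rule invis_field_eq_0_if_independent) (use k a in \<open>auto intro: Yk_fun_upd_psi\<close>)
  ultimately show ?thesis by simp
qed

theorem mainTheorem4:
  fixes k :: nat and Psi :: "nat \<Rightarrow> pt \<Rightarrow> real"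
  assumes "3 \<le> k"
    and "\<And>a. k \<le> a \<Longrightarrow> smooth_fun (Psi a)"
    and "is_symmetry (invis_field k Psi)"
  shows "(\<forall>a\<in>{k, Suc k}. \<forall>H\<in>{{p\<in>Dom. p (Cu 0) < p (Cv 0)}, {p\<in>Dom. p (Cv 0) < p (Cu 0)}}.
            \<exists>c. \<forall>p\<in>H. Psi a p = c)
       \<and> (\<forall>H\<in>{{p\<in>Dom. p (Cu 0) < p (Cv 0)}, {p\<in>Dom. p (Cv 0) < p (Cu 0)}}.
            (\<exists>p\<in>H. Psi k p \<noteq> 0) \<longrightarrow>
            (\<exists>c \<gamma>. c \<noteq> 0 \<and> (\<forall>p\<in>H. c * Psi k p = 1 \<and> c * Psi (Suc k) p = \<gamma>)))"
proof -
  have const: "\<exists>K. \<forall>p\<in>H. Psi a p = K"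
    if a: "a \<in> {k, Suc k}" and H: "H \<in> {{p\<in>Dom. p (Cu 0) < p (Cv 0)}, {p\<in>Dom. p (Cv 0) < p (Cu 0)}}"
    for a H
    using invis_field_first_integrals[OF assms(1,3) a] assms(2) a
    by (intro first_integral_constant_on_component[OF _ _ _ H]) auto
  have "\<exists>c \<gamma>. c \<noteq> 0 \<and> (\<forall>p\<in>H. c * Psi k p = 1 \<and> c * Psi (Suc k) p = \<gamma>)"
    if H: "H \<in> {{p\<in>Dom. p (Cu 0) < p (Cv 0)}, {p\<in>Dom. p (Cv 0) < p (Cu 0)}}"
      and nz: "\<exists>p\<in>H. Psi k p \<noteq> 0" for H
  proof -
    obtain K K' where "\<forall>p\<in>H. Psi k p = K" "\<forall>p\<in>H. Psi (Suc k) p = K'"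
      using const[OF _ H, where a = k] const[OF _ H, where a = "Suc k"] by blast
    moreover from this(1) nz have "K \<noteq> 0" by auto
    ultimately show ?thesis
      by (intro exI[of _ "1 / K"] exI[of _ "K' / K"]) simp
  qed
  with const show ?thesis by (intro conjI ballI impI)
qed

end
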